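(* The map $f_I: W^I\times P^+\to P_I^+$, $f_I(v,\sigma)=v^{-1}(\lambda_v+\sigma)$, is well defined and is a bijection.
   Context: Let $\mathfrak a$ be a Euclidean space with inner product $(\cdot,\cdot)$ and $R\subset\mathfrak a^*$ a root system with Weyl group $W$; for $\alpha\in R$ put $\alpha^\vee=2\alpha/(\alpha,\alpha)$. Fix positive roots $R^+$ with simple roots $\Pi$ and simple reflections $S$; write $\beta<0$ if $\beta\in -R^+$ and $\beta>0$ if $\beta\in R^+$. Let $P=\{\lambda\in\mathfrak a^*:(\lambda,\alpha^\vee)\in\mathbb Z\ \forall\alpha\in R\}$ be the weight lattice, $P^+=\{\lambda\in P:(\lambda,\alpha^\vee)\ge0\ \forall\alpha\in\Pi\}$ the dominant weights, and for $\alpha\in\Pi$ let $\varpi_\alpha\in P$ be the fundamental weight, $(\varpi_\alpha,\beta^\vee)=\delta_{\alpha\beta}$ for $\beta\in\Pi$. Let $I\subset S$, $W_I$ the parabolic subgroup generated by $I$, $R_I\subset R$ its set of roots and $R_I^+=R_I\cap R^+$. Let $W^I=\{v\in W: v(R_I^+)\subset R^+\}$ (the minimal length representatives of $W/W_I$) and $P_I^+=\{\lambda\in P:(\lambda,\alpha)\ge0\ \forall \alpha\in R_I^+\}$. For $v\in W$ the Steinberg weight is $\lambda_v=\sum_{\alpha\in\Pi,\ v^{-1}\alpha<0}\varpi_\alpha\in P^+$. *)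

theory Defs
  imports "HOL-Analysis.Analysis"
begin

text \<open>The Euclidean space a is a type of class euclidean_space; its dual is identified
  with it via the inner product. Positive roots are those positive on a fixed regular
  element h (every positive system arises this way).\<close>

definition coroot :: "'a::real_inner \<Rightarrow> 'a" where
  "coroot \<alpha> = (2 / inner \<alpha> \<alpha>) *\<^sub>R \<alpha>"

definition refl :: "'a::real_inner \<Rightarrow> 'a \<Rightarrow> 'a" where
  "refl \<alpha> x = x - inner x (coroot \<alpha>) *\<^sub>R \<alpha>"

definition root_system :: "'a::euclidean_space set \<Rightarrow> bool" where
  "root_system R \<longleftrightarrow> finite R \<and> 0 \<notin> R \<and> span R = UNIV
     \<and> (\<forall>\<alpha>\<in>R. \<forall>\<beta>\<in>R. refl \<alpha> \<beta> \<in> R)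
     \<and> (\<forall>\<alpha>\<in>R. \<forall>\<beta>\<in>R. inner \<beta> (coroot \<alpha>) \<in> \<int>)
     \<and> (\<forall>\<alpha>\<in>R. \<forall>c::real. c *\<^sub>R \<alpha> \<in> R \<longrightarrow> c = 1 \<or> c = -1)"

inductive_set weyl :: "'a::real_inner set \<Rightarrow> ('a \<Rightarrow> 'a) set" for R where
  weyl_id: "id \<in> weyl R"
| weyl_step: "w \<in> weyl R \<Longrightarrow> \<alpha> \<in> R \<Longrightarrow> refl \<alpha> \<circ> w \<in> weyl R"

definition pos_roots :: "'a::real_inner set \<Rightarrow> 'a \<Rightarrow> 'a set" where
  "pos_roots R h = {\<alpha>\<in>R. inner \<alpha> h > 0}"

definition simple_roots :: "'a::real_inner set \<Rightarrow> 'a \<Rightarrow> 'a set" where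
  "simple_roots R h = {\<alpha>\<in>pos_roots R h.
      \<not> (\<exists>\<beta>\<in>pos_roots R h. \<exists>\<gamma>\<in>pos_roots R h. \<alpha> = \<beta> + \<gamma>)}"

definition simple_refls :: "'a::real_inner set \<Rightarrow> 'a \<Rightarrow> ('a \<Rightarrow> 'a) set" where
  "simple_refls R h = refl ` simple_roots R h"

definition parabolic_roots :: "'a::real_inner set \<Rightarrow> 'a \<Rightarrow> ('a \<Rightarrow> 'a) set \<Rightarrow> 'a set" where
  "parabolic_roots R h I = {\<alpha>\<in>R. \<alpha> \<in> span {\<beta>\<in>simple_roots R h. refl \<beta> \<in> I}}"

definition weight_lattice :: "'a::real_inner set \<Rightarrow> 'a set" where
  "weight_lattice R = {l. \<forall>\<alpha>\<in>R. inner l (coroot \<alpha>) \<in> \<int>}"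

definition dominant_weights :: "'a::real_inner set \<Rightarrow> 'a \<Rightarrow> 'a set" where
  "dominant_weights R h = {l\<in>weight_lattice R. \<forall>\<alpha>\<in>simple_roots R h. inner l (coroot \<alpha>) \<ge> 0}"

definition fund_weight :: "'a::real_inner set \<Rightarrow> 'a \<Rightarrow> 'a \<Rightarrow> 'a" where
  "fund_weight R h \<alpha> = (THE l. \<forall>\<beta>\<in>simple_roots R h.
      inner l (coroot \<beta>) = (if \<beta> = \<alpha> then 1 else 0))"

text \<open>W^I: minimal length coset representatives.\<close>
definition min_reps :: "'a::real_inner set \<Rightarrow> 'a \<Rightarrow> ('a \<Rightarrow> 'a) set \<Rightarrow> ('a \<Rightarrow> 'a) set" where
  "min_reps R h I = {v\<in>weyl R. v ` (parabolic_roots R h I \<inter> pos_roots R h) \<subseteq> pos_roots R h}"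

definition par_dominant :: "'a::real_inner set \<Rightarrow> 'a \<Rightarrow> ('a \<Rightarrow> 'a) set \<Rightarrow> 'a set" where
  "par_dominant R h I = {l\<in>weight_lattice R.
      \<forall>\<alpha>\<in>parabolic_roots R h I \<inter> pos_roots R h. inner l \<alpha> \<ge> 0}"

definition steinberg :: "'a::real_inner set \<Rightarrow> 'a \<Rightarrow> ('a \<Rightarrow> 'a) \<Rightarrow> 'a" where
  "steinberg R h v = (\<Sum>\<alpha>\<in>{\<alpha>\<in>simple_roots R h. inv v \<alpha> \<in> uminus ` pos_roots R h}.
      fund_weight R h \<alpha>)"

end

theory Submission
  imports Defs
begin

text \<open>Perturb \<mu> \<in> P to x = \<mu> + \<epsilon> h with \<epsilon> so small that a root g is positive on x iff
  (\<mu>, g) > 0, or (\<mu>, g) = 0 and g > 0. Then x is regular, so a unique v \<in> W moves it into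
  the fundamental chamber. The weight v \<mu> is dominant and strictly positive on every simple root
  \<alpha> with v\<inverse> \<alpha> < 0, so \<sigma> = v \<mu> - \<lambda>_v is dominant; and if \<mu> \<in> P_I^+ then v maps
  R_I^+ into R^+. Conversely, v moves v\<inverse>(\<lambda>_v + \<sigma>) + \<epsilon> h into the fundamental chamber,
  so v, and then \<sigma>, is recovered from f_I(v, \<sigma>).\<close>

lemma linear_refl: "linear (refl a)"
  unfolding refl_def by (rule linearI) (auto simp: inner_add_left algebra_simps)

lemma refl_refl [simp]: "a \<noteq> 0 \<Longrightarrow> refl a (refl a x) = x"
  by (simp add: refl_def coroot_def inner_diff_left algebra_simps)

lemma refl_self: "a \<noteq> 0 \<Longrightarrow> refl a a = - a"
  by (simp add: refl_def coroot_def scaleR_2)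

lemma inner_refl_refl: "a \<noteq> 0 \<Longrightarrow> inner (refl a x) (refl a y) = inner x y"
  by (simp add: refl_def coroot_def inner_diff_left inner_diff_right algebra_simps inner_commute)

lemma refl_uminus: "refl (- a) = refl a"
  by (auto simp: refl_def coroot_def)

lemma inner_refl_left: "inner (refl a x) y = inner x y - inner x (coroot a) * inner a y"
  by (simp add: refl_def inner_diff_left)

lemma inner_coroot: "inner x (coroot a) = (2 / inner a a) * inner x a"
  by (simp add: coroot_def)

lemma coroot_uminus: "coroot (- a) = - coroot a"
  by (simp add: coroot_def)

lemma inner_coroot_pos_iff:
  assumes "a \<noteq> 0" shows "0 < inner x (coroot a) \<longleftrightarrow> 0 < inner x a"
proof -
  have "0 < 2 / inner a a" using assms by simp
  from mult_less_cancel_left_pos[OF this, of 0 "inner x a"] show ?thesis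
    by (metis inner_coroot mult_zero_right)
qed

lemma inner_coroot_nonneg_iff:
  assumes "a \<noteq> 0" shows "0 \<le> inner x (coroot a) \<longleftrightarrow> 0 \<le> inner x a"
proof -
  have "0 < 2 / inner a a" using assms by simp
  from mult_le_cancel_left_pos[OF this, of 0 "inner x a"] show ?thesis
    by (metis inner_coroot mult_zero_right)
qed

lemma inner_coroot_eq_0_iff: "a \<noteq> 0 \<Longrightarrow> inner x (coroot a) = 0 \<longleftrightarrow> inner x a = 0"
  by (simp add: inner_coroot)

definition refl_word :: "'a::real_inner list \<Rightarrow> 'a \<Rightarrow> 'a" where
  "refl_word L = foldr (\<lambda>a f. refl a \<circ> f) L id"

lemma refl_word_Nil [simp]: "refl_word [] = id"
  by (simp add: refl_word_def)

lemma refl_word_Cons [simp]: "refl_word (a # L) = refl a \<circ> refl_word L"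
  by (simp add: refl_word_def)

lemma refl_word_append: "refl_word (L1 @ L2) = refl_word L1 \<circ> refl_word L2"
  by (induction L1) (auto simp: refl_word_def)

lemma linear_refl_word: "linear (refl_word L)"
  by (induction L) (auto simp: linear_refl linear_compose[unfolded o_def] intro: linearI)

lemma inner_refl_word: "0 \<notin> set L \<Longrightarrow> inner (refl_word L x) (refl_word L y) = inner x y"
  by (induction L) (auto simp: inner_refl_refl)

lemma refl_word_rev_comp: "0 \<notin> set L \<Longrightarrow> refl_word (rev L) \<circ> refl_word L = id"
  by (induction L) (auto simp: refl_word_append fun_eq_iff)

lemma inv_refl_word: "0 \<notin> set L \<Longrightarrow> inv (refl_word L) = refl_word (rev L)"
  using refl_word_rev_comp[of L] refl_word_rev_comp[of "rev L"]
  by (intro inv_unique_comp) auto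

lemma bij_refl_word: "0 \<notin> set L \<Longrightarrow> bij (refl_word L)"
  using refl_word_rev_comp[of L] refl_word_rev_comp[of "rev L"]
  by (intro o_bij[of "refl_word (rev L)"]) auto

lemma sum_scaleR_delta:
  fixes A :: "'a::real_vector set"
  assumes "finite A" and "a \<in> A"
  shows "(\<Sum>d\<in>A. (if d = a then k else 0) *\<^sub>R d) = k *\<^sub>R a"
proof -
  have "(\<Sum>d\<in>A. (if d = a then k else 0) *\<^sub>R d) = (\<Sum>d\<in>A. if d = a then k *\<^sub>R a else 0)"
    by (rule sum.cong) auto
  then show ?thesis
    using assms by (simp add: sum.delta')
qed

lemma nonneg_combination_eq_0:
  fixes A :: "'a::real_inner set"
  assumes "finite A" and "\<And>a. a \<in> A \<Longrightarrow> 0 < inner a h" and "\<And>a. a \<in> A \<Longrightarrow> 0 \<le> p a"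
    and "(\<Sum>a\<in>A. p a *\<^sub>R a) = 0" and "a \<in> A"
  shows "p a = 0"
proof -
  have "(\<Sum>a\<in>A. p a * inner a h) = inner (\<Sum>a\<in>A. p a *\<^sub>R a) h"
    by (simp add: inner_sum_left)
  also have "\<dots> = 0"
    using assms(4) by simp
  finally have "\<forall>a\<in>A. p a * inner a h = 0"
    using assms(1-3) by (simp add: sum_nonneg_eq_0_iff less_imp_le)
  then show ?thesis using assms(2,5) by fastforce
qed

lemma inner_disjoint_combinations_nonpos:
  fixes A :: "'a::real_inner set"
  assumes obtuse: "\<And>a b. a \<in> A \<Longrightarrow> b \<in> A \<Longrightarrow> a \<noteq> b \<Longrightarrow> inner a b \<le> 0"
    and "\<And>a. 0 \<le> p a" and "\<And>a. 0 \<le> q a" and "\<And>a. p a * q a = 0"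
  shows "inner (\<Sum>a\<in>A. p a *\<^sub>R a) (\<Sum>b\<in>A. q b *\<^sub>R b) \<le> 0"
proof -
  have "inner (\<Sum>a\<in>A. p a *\<^sub>R a) (\<Sum>b\<in>A. q b *\<^sub>R b) = (\<Sum>a\<in>A. \<Sum>b\<in>A. inner (p a *\<^sub>R a) (q b *\<^sub>R b))"
    by (simp only: inner_sum_left inner_sum_right, rule sum.swap)
  also have "\<dots> \<le> 0"
  proof (intro sum_nonpos)
    fix a b assume "a \<in> A" "b \<in> A"
    then have "(p a * q b) * inner a b \<le> 0"
      using assms(2,3) assms(4)[of a] obtuse[of a b] by (cases "a = b") (auto intro: mult_nonneg_nonpos)
    then show "inner (p a *\<^sub>R a) (q b *\<^sub>R b) \<le> 0" by (simp add: mult_ac)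
  qed
  finally show ?thesis .
qed

text \<open>Split a vanishing combination into its positive and negative parts; both give the same
  vector y, and (y, y) \<le> 0 because the parts have disjoint supports, so y = 0.\<close>
lemma independent_if_pairwise_obtuse:
  fixes A :: "'a::real_inner set"
  assumes fin: "finite A" and pos: "\<And>a. a \<in> A \<Longrightarrow> 0 < inner a h"
    and obtuse: "\<And>a b. a \<in> A \<Longrightarrow> b \<in> A \<Longrightarrow> a \<noteq> b \<Longrightarrow> inner a b \<le> 0"
  shows "independent A"
proof
  assume "dependent A"
  then obtain u where u: "\<exists>a\<in>A. u a \<noteq> 0" "(\<Sum>a\<in>A. u a *\<^sub>R a) = 0"
    using dependent_finite[OF fin] by blast
  define p where "p a = max (u a) 0" for a
  define q where "q a = - min (u a) 0" for a
  have p0: "0 \<le> p a" and q0: "0 \<le> q a" and pq0: "p a * q a = 0" and u_pq: "p a - q a = u a" for a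
    by (auto simp: p_def q_def max_def min_def)
  define y where "y = (\<Sum>a\<in>A. p a *\<^sub>R a)"
  have "(\<Sum>a\<in>A. (p a - q a) *\<^sub>R a) = 0"
    using u(2) by (simp add: u_pq)
  then have y_q: "y = (\<Sum>a\<in>A. q a *\<^sub>R a)"
    by (simp add: y_def scaleR_diff_left sum_subtractf)
  have "inner (\<Sum>a\<in>A. p a *\<^sub>R a) (\<Sum>b\<in>A. q b *\<^sub>R b) \<le> 0"
    by (rule inner_disjoint_combinations_nonpos) (use obtuse p0 q0 pq0 in auto)
  then have "inner y y \<le> 0"
    by (simp only: y_def[symmetric] y_q[symmetric])
  then have "y = 0"
    using inner_ge_zero[of y] by simp
  have "p a = 0" if "a \<in> A" for a
    using \<open>y = 0\<close> p0 that by (auto simp: y_def intro: nonneg_combination_eq_0[OF fin pos])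
  moreover have "q a = 0" if "a \<in> A" for a
    using \<open>y = 0\<close> q0 that by (auto simp: y_q intro: nonneg_combination_eq_0[OF fin pos])
  moreover obtain a where "a \<in> A" "u a \<noteq> 0"
    using u(1) by blast
  ultimately show False
    using u_pq[of a] by simp
qed

lemma exists_dual_vector:
  fixes B :: "'a::euclidean_space set"
  assumes "independent B" and "a \<in> B"
  obtains l where "inner l a = 1" and "\<And>b. b \<in> B \<Longrightarrow> b \<noteq> a \<Longrightarrow> inner l b = 0"
proof -
  obtain y z where y: "y \<in> span (B - {a})" and z: "\<And>w. w \<in> span (B - {a}) \<Longrightarrow> orthogonal z w"
    and a: "a = y + z"
    by (metis orthogonal_subspace_decomp_exists)
  have "z \<noteq> 0"
    using assms y a by (auto simp: dependent_def)
  moreover have "inner z a = inner z z"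
    using z[OF y] a by (simp add: orthogonal_def inner_add_right)
  moreover have "inner z b = 0" if "b \<in> B" "b \<noteq> a" for b
    using z[of b] that by (simp add: orthogonal_def span_base)
  ultimately show thesis
    by (intro that[of "(1 / inner z z) *\<^sub>R z"]) auto
qed

lemma eq_if_inner_eq_on_spanning:
  assumes "span B = UNIV" and "\<And>b. b \<in> B \<Longrightarrow> inner x b = inner y b"
  shows "x = y"
proof -
  have "orthogonal (x - y) b" if "b \<in> B" for b
    using assms(2)[OF that] by (simp add: orthogonal_def inner_diff_left)
  then have "orthogonal (x - y) (x - y)"
    using orthogonal_to_span[of "x - y" B] assms(1) by blast
  then show ?thesis by (simp add: orthogonal_def)
qed

lemma Ints_pos_mult_less_4:
  fixes m n :: real
  assumes "m \<in> \<int>" "n \<in> \<int>" "0 < m" "0 < n" "m * n < 4"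
  shows "m = 1 \<or> n = 1"
proof (rule ccontr)
  assume "\<not> (m = 1 \<or> n = 1)"
  then have "2 \<le> m" "2 \<le> n"
    using assms(1-4) by (auto elim!: Ints_cases)
  then have "4 \<le> m * n"
    using mult_mono[of 2 m 2 n] by simp
  then show False
    using assms(5) by simp
qed

lemma Ints_add_small_pos_iff:
  fixes k t :: real
  assumes "k \<in> \<int>" and "\<bar>t\<bar> < 1"
  shows "0 < k + t \<longleftrightarrow> 0 < k \<or> (k = 0 \<and> 0 < t)"
  using Ints_nonzero_abs_ge1[OF assms(1)] assms(2) by (cases "k = 0") auto

locale regular_root_system =
  fixes R :: "'a::euclidean_space set" and h :: 'a
  assumes root_system: "root_system R" and regular: "\<forall>\<alpha>\<in>R. inner \<alpha> h \<noteq> 0"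
begin

abbreviation "Rp \<equiv> pos_roots R h"
abbreviation "\<Delta> \<equiv> simple_roots R h"
abbreviation "W \<equiv> weyl R"
abbreviation "P \<equiv> weight_lattice R"

lemma finite_roots: "finite R"
  using root_system by (simp add: root_system_def)

lemma span_roots: "span R = UNIV"
  using root_system by (simp add: root_system_def)

lemma refl_root: "a \<in> R \<Longrightarrow> b \<in> R \<Longrightarrow> refl a b \<in> R"
  using root_system by (simp add: root_system_def)

lemma inner_coroot_Ints: "a \<in> R \<Longrightarrow> b \<in> R \<Longrightarrow> inner b (coroot a) \<in> \<int>"
  using root_system by (simp add: root_system_def)

lemma root_multiple: "a \<in> R \<Longrightarrow> c *\<^sub>R a \<in> R \<Longrightarrow> c = 1 \<or> c = -1"
  using root_system by (simp add: root_system_def)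

lemma root_nonzero: "a \<in> R \<Longrightarrow> a \<noteq> 0"
  using root_system by (auto simp: root_system_def)

lemma uminus_root: "a \<in> R \<Longrightarrow> - a \<in> R"
  using refl_root[of a a] refl_self[of a] root_nonzero by auto

lemma pos_roots_iff: "a \<in> Rp \<longleftrightarrow> a \<in> R \<and> 0 < inner a h"
  by (simp add: pos_roots_def)

lemma root_pos_or_neg: "a \<in> R \<Longrightarrow> a \<in> Rp \<or> - a \<in> Rp"
  using regular uminus_root by (force simp: pos_roots_iff)

lemma neg_roots_iff: "a \<in> uminus ` Rp \<longleftrightarrow> a \<in> R \<and> inner a h < 0"
proof
  assume "a \<in> uminus ` Rp"
  then show "a \<in> R \<and> inner a h < 0"
    using uminus_root by (auto simp: pos_roots_iff)
next
  assume "a \<in> R \<and> inner a h < 0"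
  then have "- a \<in> Rp"
    using uminus_root by (simp add: pos_roots_iff)
  then show "a \<in> uminus ` Rp"
    by (metis image_eqI minus_minus)
qed

lemma pos_root_in_roots: "a \<in> Rp \<Longrightarrow> a \<in> R"
  by (simp add: pos_roots_iff)

lemma simple_root_pos: "a \<in> \<Delta> \<Longrightarrow> a \<in> Rp"
  by (simp add: simple_roots_def)

lemma simple_root_in_roots: "a \<in> \<Delta> \<Longrightarrow> a \<in> R"
  by (simp add: simple_roots_def pos_roots_iff)

lemma finite_pos_roots: "finite Rp"
  using finite_roots by (simp add: pos_roots_def)

lemma finite_simple_roots: "finite \<Delta>"
  using finite_pos_roots by (simp add: simple_roots_def)

subsection \<open>The Weyl group\<close>

lemma weyl_iff_refl_word: "w \<in> W \<longleftrightarrow> (\<exists>L. set L \<subseteq> R \<and> w = refl_word L)"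
proof
  assume "w \<in> W"
  then show "\<exists>L. set L \<subseteq> R \<and> w = refl_word L"
  proof induction
    case weyl_id
    then show ?case by (intro exI[of _ "[]"]) simp
  next
    case (weyl_step w \<alpha>)
    then obtain L where "set L \<subseteq> R" "w = refl_word L"
      by blast
    with weyl_step show ?case
      by (intro exI[of _ "\<alpha> # L"]) simp
  qed
next
  assume "\<exists>L. set L \<subseteq> R \<and> w = refl_word L"
  then obtain L where "set L \<subseteq> R" "w = refl_word L" by blast
  then show "w \<in> W"
    by (induction L arbitrary: w) (auto intro: weyl.intros)
qed

lemma refl_word_in_weyl: "set L \<subseteq> R \<Longrightarrow> refl_word L \<in> W"
  using weyl_iff_refl_word by blast

lemma zero_notin_roots_word: "set L \<subseteq> R \<Longrightarrow> 0 \<notin> set L"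
  using root_nonzero by auto

lemma weyl_linear: "w \<in> W \<Longrightarrow> linear w"
  using weyl_iff_refl_word linear_refl_word by auto

lemma weyl_inner: "w \<in> W \<Longrightarrow> inner (w x) (w y) = inner x y"
  by (metis weyl_iff_refl_word inner_refl_word zero_notin_roots_word)

lemma weyl_root: "w \<in> W \<Longrightarrow> a \<in> R \<Longrightarrow> w a \<in> R"
proof (induction rule: weyl.induct)
  case (weyl_step w \<alpha>)
  then show ?case by (simp add: refl_root)
qed simp

lemma weyl_inv: "w \<in> W \<Longrightarrow> inv w \<in> W"
  by (metis weyl_iff_refl_word inv_refl_word zero_notin_roots_word set_rev)

lemma weyl_bij: "w \<in> W \<Longrightarrow> bij w"
  by (metis weyl_iff_refl_word bij_refl_word zero_notin_roots_word)

lemma weyl_inv_apply [simp]: "w \<in> W \<Longrightarrow> inv w (w x) = x"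
  using weyl_bij bij_inv_eq_iff by metis

lemma weyl_apply_inv [simp]: "w \<in> W \<Longrightarrow> w (inv w x) = x"
  using weyl_bij bij_inv_eq_iff by metis

lemma weyl_comp: "w1 \<in> W \<Longrightarrow> w2 \<in> W \<Longrightarrow> w1 \<circ> w2 \<in> W"
  by (induction rule: weyl.induct) (auto simp: comp_assoc intro: weyl.intros)

lemma weyl_adjoint: "w \<in> W \<Longrightarrow> inner (w x) y = inner x (inv w y)"
  by (metis weyl_inner weyl_apply_inv)

lemma weyl_adjoint_inv: "w \<in> W \<Longrightarrow> inner (inv w x) y = inner x (w y)"
  by (metis weyl_inner weyl_apply_inv)

lemma weyl_coroot: "w \<in> W \<Longrightarrow> w (coroot a) = coroot (w a)"
  by (simp add: coroot_def weyl_inner linear_scale weyl_linear)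

lemma refl_weyl_conj: "w \<in> W \<Longrightarrow> refl (w a) = w \<circ> refl a \<circ> inv w"
proof
  fix y assume w: "w \<in> W"
  have "(w \<circ> refl a \<circ> inv w) y = y - inner (inv w y) (coroot a) *\<^sub>R w a"
    using w by (simp add: refl_def linear_diff linear_scale weyl_linear)
  also have "inner (inv w y) (coroot a) = inner y (coroot (w a))"
    using w by (simp add: weyl_adjoint_inv weyl_coroot)
  finally show "refl (w a) y = (w \<circ> refl a \<circ> inv w) y"
    by (simp add: refl_def)
qed

lemma refl_weyl_conj_cancel:
  assumes "w \<in> W" and "a \<noteq> 0"
  shows "refl (w a) \<circ> w \<circ> refl a = w"
proof
  fix x
  show "(refl (w a) \<circ> w \<circ> refl a) x = w x"
    using refl_weyl_conj[OF assms(1), of a] assms by simp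
qed

text \<open>A Weyl group element is linear, hence determined by its restriction to the spanning
  set R, which it permutes.\<close>
lemma finite_weyl: "finite W"
proof (rule inj_on_finite[of "\<lambda>w. restrict w R" W "R \<rightarrow>\<^sub>E R"])
  show "inj_on (\<lambda>w. restrict w R) W"
  proof (rule inj_onI)
    fix w1 w2 assume w: "w1 \<in> W" "w2 \<in> W" "restrict w1 R = restrict w2 R"
    then have "w1 x = w2 x" if "x \<in> R" for x
      by (metis restrict_apply' that)
    then show "w1 = w2"
      using linear_eq_on_span[OF weyl_linear[OF w(1)] weyl_linear[OF w(2)]] span_roots
      by blast
  qed
  show "(\<lambda>w. restrict w R) ` W \<subseteq> R \<rightarrow>\<^sub>E R"
    using weyl_root by auto
  show "finite (R \<rightarrow>\<^sub>E R)"
    using finite_roots by (intro finite_PiE) auto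
qed

subsection \<open>Positive and simple roots\<close>

lemma pos_root_induct [consumes 1, case_names less]:
  assumes "\<beta> \<in> Rp"
    and "\<And>\<beta>. \<beta> \<in> Rp \<Longrightarrow> (\<And>\<gamma>. \<gamma> \<in> Rp \<Longrightarrow> inner \<gamma> h < inner \<beta> h \<Longrightarrow> Q \<gamma>) \<Longrightarrow> Q \<beta>"
  shows "Q \<beta>"
  using assms(1)
proof (induction \<beta> rule: measure_induct_rule[where f = "\<lambda>\<beta>. card {x\<in>Rp. inner x h < inner \<beta> h}"])
  case (less \<beta>)
  show ?case
  proof (rule assms(2)[OF less.prems])
    fix \<gamma> assume \<gamma>: "\<gamma> \<in> Rp" "inner \<gamma> h < inner \<beta> h"
    then have "{x\<in>Rp. inner x h < inner \<gamma> h} \<subset> {x\<in>Rp. inner x h < inner \<beta> h}"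
      by force
    then have "card {x\<in>Rp. inner x h < inner \<gamma> h} < card {x\<in>Rp. inner x h < inner \<beta> h}"
      using finite_pos_roots by (simp add: psubset_card_mono)
    then show "Q \<gamma>" using less.IH \<gamma>(1) by blast
  qed
qed

lemma pos_root_simple_combination:
  assumes "\<beta> \<in> Rp"
  obtains c where "\<forall>d\<in>\<Delta>. 0 \<le> c d" and "\<beta> = (\<Sum>d\<in>\<Delta>. c d *\<^sub>R d)"
proof -
  have "\<exists>c. (\<forall>d\<in>\<Delta>. 0 \<le> c d) \<and> \<beta> = (\<Sum>d\<in>\<Delta>. c d *\<^sub>R d)"
    using assms
  proof (induction rule: pos_root_induct)
    case (less \<beta>)
    show ?case
    proof (cases "\<beta> \<in> \<Delta>")
      case True
      then show ?thesis
        using sum_scaleR_delta[OF finite_simple_roots True, of 1]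
        by (intro exI[of _ "\<lambda>d. if d = \<beta> then 1 else 0"]) simp
    next
      case False
      then obtain \<beta>1 \<beta>2 where \<beta>: "\<beta>1 \<in> Rp" "\<beta>2 \<in> Rp" "\<beta> = \<beta>1 + \<beta>2"
        using less.hyps by (auto simp: simple_roots_def)
      then have "inner \<beta>1 h < inner \<beta> h" "inner \<beta>2 h < inner \<beta> h"
        by (auto simp: pos_roots_iff inner_add_left)
      then obtain c1 c2 where
        "\<forall>d\<in>\<Delta>. 0 \<le> c1 d" "\<beta>1 = (\<Sum>d\<in>\<Delta>. c1 d *\<^sub>R d)"
        "\<forall>d\<in>\<Delta>. 0 \<le> c2 d" "\<beta>2 = (\<Sum>d\<in>\<Delta>. c2 d *\<^sub>R d)"
        using less.IH \<beta>(1,2) by meson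
      then show ?thesis using \<beta>(3)
        by (intro exI[of _ "\<lambda>d. c1 d + c2 d"]) (simp add: scaleR_add_left sum.distrib)
    qed
  qed
  then show thesis using that by blast
qed

lemma pos_root_orthogonal_simple_combination:
  assumes l: "\<forall>a\<in>\<Delta>. 0 \<le> inner l a" and \<beta>: "\<beta> \<in> Rp" "inner l \<beta> = 0"
  obtains c where "\<forall>d\<in>\<Delta>. 0 \<le> c d" and "\<forall>d\<in>\<Delta>. c d \<noteq> 0 \<longrightarrow> inner l d = 0"
    and "\<beta> = (\<Sum>d\<in>\<Delta>. c d *\<^sub>R d)"
proof -
  obtain c where c: "\<forall>d\<in>\<Delta>. 0 \<le> c d" "\<beta> = (\<Sum>d\<in>\<Delta>. c d *\<^sub>R d)"
    using pos_root_simple_combination[OF \<beta>(1)] by blast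
  have "(\<Sum>d\<in>\<Delta>. c d * inner l d) = 0"
    using \<beta>(2) by (simp add: c(2) inner_sum_right)
  then have "\<forall>d\<in>\<Delta>. c d * inner l d = 0"
    using finite_simple_roots c(1) l by (simp add: sum_nonneg_eq_0_iff)
  then show thesis using that c by auto
qed

lemma dominant_inner_pos_root:
  assumes "\<forall>a\<in>\<Delta>. 0 \<le> inner l a" and "\<beta> \<in> Rp"
  shows "0 \<le> inner l \<beta>"
proof -
  obtain c where c: "\<forall>d\<in>\<Delta>. 0 \<le> c d" "\<beta> = (\<Sum>d\<in>\<Delta>. c d *\<^sub>R d)"
    using pos_root_simple_combination[OF assms(2)] by blast
  have "0 \<le> (\<Sum>d\<in>\<Delta>. c d * inner l d)"
    using assms(1) c(1) by (intro sum_nonneg) auto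
  also have "\<dots> = inner l \<beta>"
    by (simp add: c(2) inner_sum_right)
  finally show ?thesis .
qed

lemma exists_simple_root_inner_pos:
  assumes "\<beta> \<in> Rp"
  obtains a where "a \<in> \<Delta>" and "0 < inner \<beta> a"
proof (rule ccontr)
  assume "\<not> thesis"
  then have "\<forall>a\<in>\<Delta>. 0 \<le> inner (- \<beta>) a"
    using that by force
  then have "0 \<le> inner (- \<beta>) \<beta>"
    using dominant_inner_pos_root assms by blast
  moreover have "0 < inner \<beta> \<beta>"
    using assms root_nonzero pos_root_in_roots by simp
  ultimately show False by simp
qed

text \<open>Equality in Cauchy-Schwarz would make b a multiple of a, hence equal to a or - a.\<close>
lemma inner_roots_sq_less:
  assumes a: "a \<in> R" and b: "b \<in> R" "b \<noteq> a" "b \<noteq> - a"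
  shows "(inner a b)\<^sup>2 < inner a a * inner b b"
proof -
  have "\<bar>inner a b\<bar> \<noteq> norm a * norm b"
  proof
    assume "\<bar>inner a b\<bar> = norm a * norm b"
    then have "norm a *\<^sub>R b = norm b *\<^sub>R a \<or> norm a *\<^sub>R b = (- norm b) *\<^sub>R a"
      by (simp add: norm_cauchy_schwarz_abs_eq)
    then obtain t where t: "norm a *\<^sub>R b = t *\<^sub>R a"
      by blast
    have "a \<noteq> 0" using a root_nonzero by blast
    then have "b = (1 / norm a) *\<^sub>R (norm a *\<^sub>R b)"
      by simp
    also have "\<dots> = (t / norm a) *\<^sub>R a"
      using t by simp
    finally have "b = (t / norm a) *\<^sub>R a" .
    then have "t / norm a = 1 \<or> t / norm a = -1"
      using root_multiple a b(1) by metis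
    then show False
      using \<open>b = (t / norm a) *\<^sub>R a\<close> b(2,3) by auto
  qed
  then have "\<bar>inner a b\<bar> < norm a * norm b"
    using Cauchy_Schwarz_ineq2[of a b] by linarith
  then have "\<bar>inner a b\<bar>\<^sup>2 < (norm a * norm b)\<^sup>2"
    by (intro power_strict_mono) auto
  then show ?thesis
    by (simp add: power_mult_distrib power2_norm_eq_inner)
qed

text \<open>The integers m = (a, coroot b) and n = (b, coroot a) are positive with
  m n = 4 cos^2 < 4, so one of them is 1, and the corresponding reflection maps one of the
  roots to a - b or b - a.\<close>
lemma root_diff_root:
  assumes a: "a \<in> R" and b: "b \<in> R" and ab: "0 < inner a b" "a \<noteq> b"
  shows "a - b \<in> R"
proof -
  define m where "m = inner a (coroot b)"
  define n where "n = inner b (coroot a)"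
  have "a \<noteq> 0" "b \<noteq> 0" using a b root_nonzero by auto
  then have m: "0 < m" and n: "0 < n"
    using ab(1) by (simp_all add: m_def n_def inner_coroot_pos_iff inner_commute)
  have "b \<noteq> - a"
  proof
    assume "b = - a"
    then have "inner a b = - inner a a" by simp
    then show False using ab(1) inner_ge_zero[of a] by linarith
  qed
  then have "(inner a b)\<^sup>2 < inner a a * inner b b"
    using inner_roots_sq_less a b ab(2) by simp
  moreover have "m * n = 4 * (inner a b)\<^sup>2 / (inner a a * inner b b)"
    by (simp add: m_def n_def coroot_def inner_commute power2_eq_square)
  ultimately have "m * n < 4"
    using \<open>a \<noteq> 0\<close> \<open>b \<noteq> 0\<close> by (simp add: divide_less_eq)
  moreover have "m \<in> \<int>" "n \<in> \<int>"
    using inner_coroot_Ints a b by (simp_all add: m_def n_def)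
  ultimately have "m = 1 \<or> n = 1"
    using Ints_pos_mult_less_4 m n by blast
  then show ?thesis
  proof
    assume "m = 1"
    then have "refl b a = a - b" by (simp add: refl_def m_def)
    then show ?thesis using refl_root[OF b a] by simp
  next
    assume "n = 1"
    then have "refl a b = - (a - b)" by (simp add: refl_def n_def)
    then show ?thesis using refl_root[OF a b] uminus_root by fastforce
  qed
qed

lemma simple_root_indecomposable: "a \<in> \<Delta> \<Longrightarrow> \<beta> \<in> Rp \<Longrightarrow> \<gamma> \<in> Rp \<Longrightarrow> a \<noteq> \<beta> + \<gamma>"
  by (auto simp: simple_roots_def)

lemma simple_roots_inner_nonpos:
  assumes a: "a \<in> \<Delta>" and b: "b \<in> \<Delta>" and "a \<noteq> b"
  shows "inner a b \<le> 0"
proof (rule ccontr)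
  assume "\<not> inner a b \<le> 0"
  then have "a - b \<in> R"
    using root_diff_root simple_root_in_roots a b \<open>a \<noteq> b\<close> by simp
  then have "a - b \<in> Rp \<or> b - a \<in> Rp"
    using root_pos_or_neg by fastforce
  then show False
    using simple_root_indecomposable[OF a _ simple_root_pos[OF b], of "a - b"]
      simple_root_indecomposable[OF b simple_root_pos[OF a], of "b - a"] by auto
qed

lemma independent_simple_roots: "independent \<Delta>"
  using finite_simple_roots simple_roots_inner_nonpos simple_root_pos
  by (intro independent_if_pairwise_obtuse[where h = h]) (auto simp: pos_roots_iff)

lemma span_simple_roots: "span \<Delta> = UNIV"
proof -
  have "\<beta> \<in> span \<Delta>" if "\<beta> \<in> Rp" for \<beta>
    using that by (rule pos_root_simple_combination) (simp add: span_base span_scale span_sum)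
  then have "R \<subseteq> span \<Delta>"
    using root_pos_or_neg span_neg[of "- _" \<Delta>] by fastforce
  then show ?thesis
    using span_minimal[OF _ subspace_span] span_roots by blast
qed

lemma pos_root_other_simple_coeff:
  assumes a: "a \<in> \<Delta>" and \<beta>: "\<beta> \<in> Rp" "\<beta> \<noteq> a"
    and c: "\<forall>d\<in>\<Delta>. 0 \<le> c d" "\<beta> = (\<Sum>d\<in>\<Delta>. c d *\<^sub>R d)"
  obtains d where "d \<in> \<Delta>" and "d \<noteq> a" and "0 < c d"
proof (rule ccontr)
  assume "\<not> thesis"
  then have "\<forall>d\<in>\<Delta> - {a}. c d = 0"
    using that c(1) by force
  then have "\<beta> = c a *\<^sub>R a"
    using c(2) sum.remove[OF finite_simple_roots a, of "\<lambda>d. c d *\<^sub>R d"] by simp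
  then have "c a = 1 \<or> c a = -1"
    using root_multiple simple_root_in_roots pos_root_in_roots a \<beta>(1) by metis
  then show False
    using \<open>\<beta> = c a *\<^sub>R a\<close> \<beta> simple_root_pos[OF a] by (auto simp: pos_roots_iff)
qed

text \<open>The reflection in a does not change the positive coefficient of \<beta> at some other
  simple root, so the coefficients of s_a \<beta> cannot all be nonpositive.\<close>
lemma simple_refl_pos_root:
  assumes a: "a \<in> \<Delta>" and \<beta>: "\<beta> \<in> Rp" "\<beta> \<noteq> a"
  shows "refl a \<beta> \<in> Rp"
proof (rule ccontr)
  assume "refl a \<beta> \<notin> Rp"
  then have "- refl a \<beta> \<in> Rp"
    using root_pos_or_neg refl_root simple_root_in_roots pos_root_in_roots a \<beta>(1) by blast
  then obtain e where e: "\<forall>d\<in>\<Delta>. 0 \<le> e d" "- refl a \<beta> = (\<Sum>d\<in>\<Delta>. e d *\<^sub>R d)"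
    by (rule pos_root_simple_combination)
  obtain c where c: "\<forall>d\<in>\<Delta>. 0 \<le> c d" "\<beta> = (\<Sum>d\<in>\<Delta>. c d *\<^sub>R d)"
    using pos_root_simple_combination[OF \<beta>(1)] by blast
  obtain d0 where d0: "d0 \<in> \<Delta>" "d0 \<noteq> a" "0 < c d0"
    using pos_root_other_simple_coeff[OF a \<beta> c] by blast
  define k where "k = inner \<beta> (coroot a)"
  define u where "u d = c d + e d - (if d = a then k else 0)" for d
  have "(\<Sum>d\<in>\<Delta>. u d *\<^sub>R d)
      = (\<Sum>d\<in>\<Delta>. c d *\<^sub>R d) + (\<Sum>d\<in>\<Delta>. e d *\<^sub>R d) - (\<Sum>d\<in>\<Delta>. (if d = a then k else 0) *\<^sub>R d)"
    by (simp add: u_def scaleR_add_left scaleR_diff_left sum.distrib sum_subtractf)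
  also have "\<dots> = \<beta> - refl a \<beta> - k *\<^sub>R a"
    by (simp only: c(2)[symmetric] e(2)[symmetric] sum_scaleR_delta[OF finite_simple_roots a]) simp
  also have "\<dots> = 0"
    by (simp add: refl_def k_def)
  finally have "(\<Sum>d\<in>\<Delta>. u d *\<^sub>R d) = 0" .
  moreover have "0 < u d0"
    using d0 e(1) by (simp add: u_def add_pos_nonneg)
  ultimately have "dependent \<Delta>"
    using d0(1) dependent_finite[OF finite_simple_roots] by (metis less_irrefl)
  then show False
    using independent_simple_roots by simp
qed

subsection \<open>Simple reflections and the fundamental chamber\<close>

lemma pos_root_simple_conj:
  assumes "\<beta> \<in> Rp"
  obtains L a where "set L \<subseteq> \<Delta>" and "a \<in> \<Delta>" and "refl_word L a = \<beta>"
proof -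
  have "\<exists>L a. set L \<subseteq> \<Delta> \<and> a \<in> \<Delta> \<and> refl_word L a = \<beta>"
    using assms
  proof (induction rule: pos_root_induct)
    case (less \<beta>)
    show ?case
    proof (cases "\<beta> \<in> \<Delta>")
      case True
      then show ?thesis by (intro exI[of _ "[]"] exI[of _ \<beta>]) simp
    next
      case False
      obtain a where a: "a \<in> \<Delta>" "0 < inner \<beta> a"
        using exists_simple_root_inner_pos[OF less.hyps] by blast
      have "a \<noteq> 0"
        using a(1) simple_root_in_roots root_nonzero by blast
      have "refl a \<beta> \<in> Rp"
        using simple_refl_pos_root[OF a(1) less.hyps] False a(1) by blast
      moreover have "inner (refl a \<beta>) h < inner \<beta> h"
        using a \<open>a \<noteq> 0\<close> simple_root_pos[OF a(1)]
        by (simp add: inner_refl_left inner_coroot_pos_iff pos_roots_iff)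
      ultimately obtain L c where "set L \<subseteq> \<Delta>" "c \<in> \<Delta>" "refl_word L c = refl a \<beta>"
        using less.IH by blast
      then show ?thesis
        using a(1) \<open>a \<noteq> 0\<close> by (intro exI[of _ "a # L"] exI[of _ c]) auto
    qed
  qed
  then show thesis using that by blast
qed

lemma refl_simple_word:
  assumes "\<beta> \<in> R"
  obtains L where "set L \<subseteq> \<Delta>" and "refl \<beta> = refl_word L"
proof -
  have "\<exists>L. set L \<subseteq> \<Delta> \<and> refl \<beta> = refl_word L" if \<beta>: "\<beta> \<in> Rp" for \<beta>
  proof -
    obtain L a where La: "set L \<subseteq> \<Delta>" "a \<in> \<Delta>" "refl_word L a = \<beta>"
      using pos_root_simple_conj[OF \<beta>] by blast
    have LR: "set L \<subseteq> R"
      using La(1) simple_root_in_roots by blast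
    have "refl \<beta> = refl_word L \<circ> refl a \<circ> refl_word (rev L)"
      using refl_weyl_conj[OF refl_word_in_weyl[OF LR], of a] La(3)
        inv_refl_word[OF zero_notin_roots_word[OF LR]] by simp
    then have "refl \<beta> = refl_word (L @ [a] @ rev L)"
      by (simp add: refl_word_append comp_assoc)
    then show ?thesis
      using La(1,2) by (intro exI[of _ "L @ [a] @ rev L"]) auto
  qed
  then show thesis
    using that root_pos_or_neg[OF assms] refl_uminus by metis
qed

lemma weyl_simple_word:
  assumes "w \<in> W"
  obtains L where "set L \<subseteq> \<Delta>" and "w = refl_word L"
proof -
  have "\<exists>L. set L \<subseteq> \<Delta> \<and> w = refl_word L"
    using assms
  proof (induction rule: weyl.induct)
    case weyl_id
    then show ?case by (intro exI[of _ "[]"]) simp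
  next
    case (weyl_step w \<alpha>)
    then obtain L1 L2 where "set L1 \<subseteq> \<Delta>" "refl \<alpha> = refl_word L1" "set L2 \<subseteq> \<Delta>" "w = refl_word L2"
      using refl_simple_word by metis
    then show ?case
      by (intro exI[of _ "L1 @ L2"]) (simp add: refl_word_append)
  qed
  then show thesis using that by blast
qed

text \<open>Since s_b permutes the positive roots other than b, w = refl_word L maps a to b,
  and then s_b w s_a = w.\<close>
lemma refl_word_Cons_cancel:
  assumes L: "set L \<subseteq> \<Delta>" and a: "a \<in> \<Delta>" and b: "b \<in> \<Delta>"
    and "refl_word L a \<in> Rp" and "inner (refl_word (b # L) a) h < 0"
  shows "refl_word (b # L) \<circ> refl a = refl_word L"
proof -
  have LR: "set L \<subseteq> R"
    using L simple_root_in_roots by blast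
  have "refl b (refl_word L a) \<notin> Rp"
    using assms(5) by (simp add: pos_roots_iff)
  then have "refl_word L a = b"
    using simple_refl_pos_root[OF b assms(4)] by blast
  then show ?thesis
    using refl_weyl_conj_cancel[OF refl_word_in_weyl[OF LR]] simple_root_in_roots[OF a] root_nonzero
    by (metis refl_word_Cons)
qed

lemma refl_word_deletion:
  assumes "set L \<subseteq> \<Delta>" and "a \<in> \<Delta>" and "inner (refl_word L a) h < 0"
  obtains L' where "set L' \<subseteq> \<Delta>" and "length L' < length L" and "refl_word L \<circ> refl a = refl_word L'"
proof -
  have "\<exists>L'. set L' \<subseteq> \<Delta> \<and> length L' < length L \<and> refl_word L \<circ> refl a = refl_word L'"
    using assms
  proof (induction L)
    case Nil
    then show ?case using simple_root_pos[of a] by (simp add: pos_roots_iff)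
  next
    case (Cons b L)
    have L: "set L \<subseteq> \<Delta>" and b: "b \<in> \<Delta>"
      using Cons.prems by auto
    have LR: "set L \<subseteq> R"
      using L simple_root_in_roots by blast
    show ?case
    proof (cases "inner (refl_word L a) h < 0")
      case True
      then obtain L' where L': "set L' \<subseteq> \<Delta>" "length L' < length L" "refl_word L \<circ> refl a = refl_word L'"
        using Cons.IH L Cons.prems(2) by blast
      then have "refl_word (b # L) \<circ> refl a = refl_word (b # L')"
        by (metis refl_word_Cons comp_assoc)
      moreover have "set (b # L') \<subseteq> \<Delta>" "length (b # L') < length (b # L)"
        using b L' by auto
      ultimately show ?thesis by blast
    next
      case False
      have "refl_word L a \<in> R"
        using weyl_root[OF refl_word_in_weyl[OF LR]] simple_root_in_roots Cons.prems(2) by blast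
      then have "refl_word L a \<in> Rp"
        using False regular by (force simp: pos_roots_iff)
      then have "refl_word (b # L) \<circ> refl a = refl_word L"
        using refl_word_Cons_cancel L Cons.prems(2,3) b by blast
      moreover have "length L < length (b # L)"
        by simp
      ultimately show ?thesis
        using L by blast
    qed
  qed
  then show thesis using that by blast
qed

lemma refl_word_fixing_pos_roots:
  assumes "set L \<subseteq> \<Delta>" and "refl_word L ` Rp \<subseteq> Rp"
  shows "refl_word L = id"
  using assms
proof (induction L rule: length_induct)
  case (1 L)
  show ?case
  proof (cases L rule: rev_cases)
    case Nil
    then show ?thesis by simp
  next
    case (snoc L0 a)
    have a: "a \<in> \<Delta>" and L0: "set L0 \<subseteq> \<Delta>"
      using "1.prems"(1) snoc by auto
    have "a \<noteq> 0"
      using a simple_root_in_roots root_nonzero by blast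
    have L: "refl_word L = refl_word L0 \<circ> refl a"
      using snoc by (simp add: refl_word_append)
    have "refl_word L a \<in> Rp"
      using "1.prems"(2) a simple_root_pos by blast
    moreover have "refl_word L a = - refl_word L0 a"
      using L refl_self[OF \<open>a \<noteq> 0\<close>] linear_neg[OF linear_refl_word] by simp
    ultimately have "inner (refl_word L0 a) h < 0"
      by (simp add: pos_roots_iff)
    then obtain L' where "set L' \<subseteq> \<Delta>" "length L' < length L0" "refl_word L = refl_word L'"
      using refl_word_deletion[OF L0 a] L by metis
    then show ?thesis
      using "1.IH" "1.prems"(2) snoc by (metis length_append_singleton less_SucI)
  qed
qed

lemma weyl_fixing_pos_roots: "w \<in> W \<Longrightarrow> w ` Rp \<subseteq> Rp \<Longrightarrow> w = id"
  by (metis weyl_simple_word refl_word_fixing_pos_roots)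

definition chamber :: "'a set" where
  "chamber = {x. \<forall>\<beta>\<in>Rp. 0 < inner x \<beta>}"

text \<open>Among the W-conjugates of x pick one with maximal height (-, h); the reflection
  in any simple root it pairs negatively with would increase the height.\<close>
lemma chamber_exists:
  assumes x: "\<forall>\<beta>\<in>R. inner x \<beta> \<noteq> 0"
  obtains w where "w \<in> W" and "w x \<in> chamber"
proof -
  define F where "F = (\<lambda>w. inner (w x) h) ` W"
  have "W \<noteq> {}"
    using weyl_id by blast
  then have "Max F \<in> F"
    using finite_weyl by (simp add: F_def)
  then obtain w where w: "w \<in> W" "inner (w x) h = Max F"
    by (auto simp: F_def)
  have max: "inner (w' x) h \<le> inner (w x) h" if "w' \<in> W" for w'
    using w that finite_weyl by (simp add: F_def)
  have "0 \<le> inner (w x) a" if a: "a \<in> \<Delta>" for a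
  proof (rule ccontr)
    assume "\<not> 0 \<le> inner (w x) a"
    moreover have "a \<noteq> 0" "0 < inner a h"
      using a simple_root_pos simple_root_in_roots root_nonzero by (auto simp: pos_roots_iff)
    ultimately have "inner (w x) (coroot a) < 0"
      using inner_coroot_nonneg_iff by (metis not_le)
    then have "inner (w x) (coroot a) * inner a h < 0"
      using \<open>0 < inner a h\<close> by (simp add: mult_neg_pos)
    moreover have "inner ((refl a \<circ> w) x) h \<le> inner (w x) h"
      using max a w(1) simple_root_in_roots weyl_step by blast
    ultimately show False
      by (simp add: inner_refl_left)
  qed
  moreover have "inner (w x) \<beta> \<noteq> 0" if "\<beta> \<in> R" for \<beta>
    using x weyl_root[OF weyl_inv[OF w(1)] that] by (simp add: weyl_adjoint w(1))
  ultimately have "w x \<in> chamber"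
    using dominant_inner_pos_root pos_root_in_roots by (force simp: chamber_def order_less_le)
  then show thesis using that w(1) by blast
qed

lemma chamber_inner_root_pos_iff:
  assumes "x \<in> chamber" and "\<gamma> \<in> R"
  shows "0 < inner x \<gamma> \<longleftrightarrow> \<gamma> \<in> Rp"
  using assms root_pos_or_neg[OF assms(2)] by (force simp: chamber_def)

lemma chamber_unique:
  assumes w: "w1 \<in> W" "w2 \<in> W" and "w1 x \<in> chamber" "w2 x \<in> chamber"
  shows "w1 = w2"
proof -
  define u where "u = w2 \<circ> inv w1"
  have u: "u \<in> W"
    using w by (simp add: u_def weyl_comp weyl_inv)
  have "u \<beta> \<in> Rp" if \<beta>: "\<beta> \<in> Rp" for \<beta>
  proof -
    have "u \<beta> \<in> R"
      using weyl_root[OF u] pos_root_in_roots[OF \<beta>] .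
    moreover have "inner (w2 x) (u \<beta>) = inner (w1 x) \<beta>"
      using weyl_inner[OF u, of "w1 x" \<beta>] w(1) by (simp add: u_def)
    then have "0 < inner (w2 x) (u \<beta>)"
      using assms(3) \<beta> by (simp add: chamber_def)
    ultimately show ?thesis
      using chamber_inner_root_pos_iff[OF assms(4)] by blast
  qed
  then have "u = id"
    using weyl_fixing_pos_roots[OF u] by blast
  show ?thesis
  proof
    fix y
    show "w1 y = w2 y"
      using fun_cong[OF \<open>u = id\<close>, of "w1 y"] w(1) by (simp add: u_def)
  qed
qed

subsection \<open>Weights\<close>

lemma weyl_weight:
  assumes "l \<in> P" and w: "w \<in> W"
  shows "w l \<in> P"
proof -
  have "inner (w l) (coroot a) = inner l (coroot (inv w a))" for a
    using w by (simp add: weyl_adjoint weyl_coroot weyl_inv)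
  then show ?thesis
    using assms weyl_root[OF weyl_inv[OF w]] by (simp add: weight_lattice_def)
qed

lemma weight_add: "l \<in> P \<Longrightarrow> l' \<in> P \<Longrightarrow> l + l' \<in> P"
  by (simp add: weight_lattice_def inner_add_left Ints_add)

lemma weight_diff: "l \<in> P \<Longrightarrow> l' \<in> P \<Longrightarrow> l - l' \<in> P"
  by (simp add: weight_lattice_def inner_diff_left Ints_diff)

lemma weight_zero: "0 \<in> P"
  by (simp add: weight_lattice_def)

lemma weight_sum: "(\<And>a. a \<in> A \<Longrightarrow> f a \<in> P) \<Longrightarrow> sum f A \<in> P"
  by (induction A rule: infinite_finite_induct) (auto simp: weight_zero intro: weight_add)

text \<open>Simple reflections preserve integrality against the simple coroots, and every positive
  coroot is the image of a simple coroot under a word in simple reflections.\<close>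
lemma weight_if_simple_coroots_Ints:
  assumes l: "\<forall>a\<in>\<Delta>. inner l (coroot a) \<in> \<int>"
  shows "l \<in> P"
proof -
  define P\<Delta> where "P\<Delta> = {y. \<forall>a\<in>\<Delta>. inner y (coroot a) \<in> \<int>}"
  have stable: "refl_word M y \<in> P\<Delta>" if "set M \<subseteq> \<Delta>" "y \<in> P\<Delta>" for M y
    using that
  proof (induction M)
    case (Cons d M)
    then have "inner d (coroot a) \<in> \<int>" if "a \<in> \<Delta>" for a
      using inner_coroot_Ints simple_root_in_roots that by simp
    with Cons show ?case
      by (auto simp: P\<Delta>_def inner_refl_left intro!: Ints_diff Ints_mult)
  qed simp
  have pos: "inner l (coroot g) \<in> \<int>" if g: "g \<in> Rp" for g
  proof -
    obtain L a where La: "set L \<subseteq> \<Delta>" "a \<in> \<Delta>" "refl_word L a = g"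
      using pos_root_simple_conj[OF g] by blast
    have LR: "set L \<subseteq> R"
      using La(1) simple_root_in_roots by blast
    have "inner l (coroot g) = inner (refl_word (rev L) l) (coroot a)"
      using La(3) refl_word_in_weyl[OF LR] inv_refl_word[OF zero_notin_roots_word[OF LR]]
      by (metis weyl_adjoint_inv weyl_coroot)
    then show ?thesis
      using stable[of "rev L" l] La(1,2) l by (auto simp: P\<Delta>_def)
  qed
  have "inner l (coroot g) \<in> \<int>" if "g \<in> R" for g
    using root_pos_or_neg[OF that] pos
    by (metis Ints_minus coroot_uminus inner_minus_right minus_minus)
  then show ?thesis
    by (simp add: weight_lattice_def)
qed

lemma fund_weight_coroot:
  assumes a: "a \<in> \<Delta>" and b: "b \<in> \<Delta>"
  shows "inner (fund_weight R h a) (coroot b) = (if b = a then 1 else 0)"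
proof -
  obtain l where l: "inner l a = 1" "\<And>b. b \<in> \<Delta> \<Longrightarrow> b \<noteq> a \<Longrightarrow> inner l b = 0"
    using exists_dual_vector[OF independent_simple_roots a] by blast
  define l\<^sub>a where "l\<^sub>a = (inner a a / 2) *\<^sub>R l"
  have "a \<noteq> 0"
    using a simple_root_in_roots root_nonzero by blast
  have l\<^sub>a: "inner l\<^sub>a (coroot b) = (if b = a then 1 else 0)" if "b \<in> \<Delta>" for b
    using l that \<open>a \<noteq> 0\<close> by (cases "b = a") (simp_all add: l\<^sub>a_def inner_coroot)
  have "\<exists>!l. \<forall>b\<in>\<Delta>. inner l (coroot b) = (if b = a then 1 else 0)"
  proof (rule ex1I[of _ l\<^sub>a])
    fix l' assume l': "\<forall>b\<in>\<Delta>. inner l' (coroot b) = (if b = a then 1 else 0)"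
    have "inner l' b = inner l\<^sub>a b" if "b \<in> \<Delta>" for b
    proof -
      have "inner l' (coroot b) = inner l\<^sub>a (coroot b)"
        using l' l\<^sub>a that by simp
      moreover have "b \<noteq> 0"
        using that simple_root_in_roots root_nonzero by blast
      ultimately show ?thesis
        by (simp add: inner_coroot)
    qed
    then show "l' = l\<^sub>a"
      using eq_if_inner_eq_on_spanning[OF span_simple_roots] by blast
  qed (use l\<^sub>a in blast)
  then show ?thesis
    using theI'[of "\<lambda>l. \<forall>b\<in>\<Delta>. inner l (coroot b) = (if b = a then 1 else 0)"] b
    unfolding fund_weight_def by blast
qed

lemma fund_weight_weight: "a \<in> \<Delta> \<Longrightarrow> fund_weight R h a \<in> P"
  by (rule weight_if_simple_coroots_Ints) (simp add: fund_weight_coroot)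

definition left_descents :: "('a \<Rightarrow> 'a) \<Rightarrow> 'a set" where
  "left_descents v = {a\<in>\<Delta>. inv v a \<in> uminus ` Rp}"

lemma steinberg_weight: "steinberg R h v \<in> P"
  unfolding steinberg_def by (rule weight_sum) (auto intro: fund_weight_weight)

lemma steinberg_coroot:
  assumes "b \<in> \<Delta>"
  shows "inner (steinberg R h v) (coroot b) = (if b \<in> left_descents v then 1 else 0)"
proof -
  have "inner (steinberg R h v) (coroot b) = (\<Sum>a\<in>left_descents v. inner (fund_weight R h a) (coroot b))"
    by (simp add: steinberg_def left_descents_def inner_sum_left)
  also have "\<dots> = (\<Sum>a\<in>left_descents v. if b = a then 1 else 0)"
    using assms by (intro sum.cong) (auto simp: fund_weight_coroot left_descents_def)
  also have "\<dots> = (if b \<in> left_descents v then 1 else 0)"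
    using finite_simple_roots by (simp add: left_descents_def)
  finally show ?thesis .
qed

lemma dominant_weights_inner_nonneg: "l \<in> dominant_weights R h \<Longrightarrow> a \<in> \<Delta> \<Longrightarrow> 0 \<le> inner l a"
  using simple_root_in_roots root_nonzero by (auto simp: dominant_weights_def inner_coroot_nonneg_iff)

lemma steinberg_add_dominant:
  assumes "\<sigma> \<in> dominant_weights R h"
  shows "steinberg R h v + \<sigma> \<in> dominant_weights R h"
  using assms steinberg_weight weight_add
  by (auto simp: dominant_weights_def inner_add_left steinberg_coroot)

lemma steinberg_add_dominant_descent_pos:
  assumes "\<sigma> \<in> dominant_weights R h" and a: "a \<in> left_descents v"
  shows "0 < inner (steinberg R h v + \<sigma>) a"
proof -
  have "a \<in> \<Delta>"
    using a by (simp add: left_descents_def)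
  then have "a \<noteq> 0"
    using simple_root_in_roots root_nonzero by blast
  have "0 \<le> inner \<sigma> (coroot a)"
    using assms(1) \<open>a \<in> \<Delta>\<close> by (simp add: dominant_weights_def)
  then have "0 < inner (steinberg R h v + \<sigma>) (coroot a)"
    using a \<open>a \<in> \<Delta>\<close> by (simp add: inner_add_left steinberg_coroot)
  then show ?thesis
    using inner_coroot_pos_iff[OF \<open>a \<noteq> 0\<close>] by blast
qed

subsection \<open>Perturbing a weight into a regular point\<close>

text \<open>The perturbation \<mu> + \<epsilon> h is too small to change the sign of a nonzero integer
  (\<mu>, coroot g), so it breaks only the ties (\<mu>, g) = 0, in the direction of h.\<close>
definition perturb_eps :: real where
  "perturb_eps = 1 / (1 + (\<Sum>b\<in>R. \<bar>inner h (coroot b)\<bar>))"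

definition perturb :: "'a \<Rightarrow> 'a" where
  "perturb \<mu> = \<mu> + perturb_eps *\<^sub>R h"

lemma perturb_eps_pos: "0 < perturb_eps"
proof -
  have "0 \<le> (\<Sum>b\<in>R. \<bar>inner h (coroot b)\<bar>)"
    by (rule sum_nonneg) simp
  then have "0 < 1 + (\<Sum>b\<in>R. \<bar>inner h (coroot b)\<bar>)"
    by linarith
  then show ?thesis
    by (simp add: perturb_eps_def)
qed

lemma perturb_eps_small:
  assumes "g \<in> R"
  shows "\<bar>perturb_eps * inner h (coroot g)\<bar> < 1"
proof -
  define E where "E = (\<Sum>b\<in>R. \<bar>inner h (coroot b)\<bar>)"
  have "\<bar>inner h (coroot g)\<bar> \<le> E"
    unfolding E_def using assms finite_roots by (intro member_le_sum) auto
  moreover have "0 \<le> E"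
    unfolding E_def by (rule sum_nonneg) simp
  ultimately show ?thesis
    by (simp add: perturb_eps_def E_def[symmetric] abs_mult field_simps)
qed

lemma perturb_pos_iff:
  assumes \<mu>: "\<mu> \<in> P" and g: "g \<in> R"
  shows "0 < inner (perturb \<mu>) g \<longleftrightarrow> 0 < inner \<mu> g \<or> (inner \<mu> g = 0 \<and> 0 < inner g h)"
proof -
  have "g \<noteq> 0"
    using g root_nonzero by blast
  have "inner \<mu> (coroot g) \<in> \<int>"
    using \<mu> g by (simp add: weight_lattice_def)
  have "0 < inner (perturb \<mu>) g \<longleftrightarrow> 0 < inner (perturb \<mu>) (coroot g)"
    using inner_coroot_pos_iff[OF \<open>g \<noteq> 0\<close>] by simp
  also have "\<dots> \<longleftrightarrow> 0 < inner \<mu> (coroot g) + perturb_eps * inner h (coroot g)"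
    by (simp add: perturb_def inner_add_left)
  also have "\<dots> \<longleftrightarrow>
      0 < inner \<mu> (coroot g) \<or> (inner \<mu> (coroot g) = 0 \<and> 0 < perturb_eps * inner h (coroot g))"
    using \<open>inner \<mu> (coroot g) \<in> \<int>\<close> perturb_eps_small[OF g] by (rule Ints_add_small_pos_iff)
  also have "\<dots> \<longleftrightarrow> 0 < inner \<mu> g \<or> (inner \<mu> g = 0 \<and> 0 < inner g h)"
    using perturb_eps_pos inner_coroot_pos_iff[OF \<open>g \<noteq> 0\<close>] inner_coroot_eq_0_iff[OF \<open>g \<noteq> 0\<close>]
    by (simp add: zero_less_mult_iff inner_commute[of h g])
  finally show ?thesis .
qed

lemma perturb_regular:
  assumes "\<mu> \<in> P"
  shows "\<forall>g\<in>R. inner (perturb \<mu>) g \<noteq> 0"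
proof
  fix g assume g: "g \<in> R"
  show "inner (perturb \<mu>) g \<noteq> 0"
  proof
    assume "inner (perturb \<mu>) g = 0"
    then have "\<not> 0 < inner (perturb \<mu>) g" and "\<not> 0 < inner (perturb \<mu>) (- g)"
      by simp_all
    then have "inner g h = 0"
      using perturb_pos_iff[OF assms g] perturb_pos_iff[OF assms uminus_root[OF g]] by auto
    then show False
      using regular g by blast
  qed
qed

subsection \<open>The bijection\<close>

lemma steinberg_map_par_dominant:
  assumes v: "v \<in> min_reps R h I" and \<sigma>: "\<sigma> \<in> dominant_weights R h"
  shows "inv v (steinberg R h v + \<sigma>) \<in> par_dominant R h I"
proof -
  define \<nu> where "\<nu> = steinberg R h v + \<sigma>"
  have vW: "v \<in> W" and v_pos: "v ` (parabolic_roots R h I \<inter> Rp) \<subseteq> Rp"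
    using v by (auto simp: min_reps_def)
  have \<nu>: "\<nu> \<in> dominant_weights R h"
    using steinberg_add_dominant[OF \<sigma>] by (simp add: \<nu>_def)
  have "inv v \<nu> \<in> P"
    using \<nu> weyl_weight weyl_inv[OF vW] by (simp add: dominant_weights_def)
  moreover have "0 \<le> inner (inv v \<nu>) \<alpha>" if "\<alpha> \<in> parabolic_roots R h I \<inter> Rp" for \<alpha>
  proof -
    have "v \<alpha> \<in> Rp"
      using v_pos that by blast
    then have "0 \<le> inner \<nu> (v \<alpha>)"
      using dominant_inner_pos_root dominant_weights_inner_nonneg[OF \<nu>] by blast
    then show ?thesis
      by (simp add: weyl_adjoint_inv[OF vW])
  qed
  ultimately show ?thesis
    by (simp add: par_dominant_def \<nu>_def)
qed

text \<open>Write \<beta> as a nonnegative combination of simple roots orthogonal to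
  \<nu> = \<lambda>_v + \<sigma>; none of them is a left descent of v, because \<nu> is strictly positive on those.\<close>
lemma inv_pos_root_pos_if_orthogonal:
  assumes v: "v \<in> W" and \<sigma>: "\<sigma> \<in> dominant_weights R h"
    and \<beta>: "\<beta> \<in> Rp" "inner (steinberg R h v + \<sigma>) \<beta> = 0"
  shows "0 < inner (inv v \<beta>) h"
proof -
  define \<nu> where "\<nu> = steinberg R h v + \<sigma>"
  have "\<forall>a\<in>\<Delta>. 0 \<le> inner \<nu> a"
    using dominant_weights_inner_nonneg steinberg_add_dominant[OF \<sigma>] by (simp add: \<nu>_def)
  moreover have "inner \<nu> \<beta> = 0"
    using \<beta>(2) by (simp add: \<nu>_def)
  ultimately obtain c where c: "\<forall>d\<in>\<Delta>. 0 \<le> c d" "\<forall>d\<in>\<Delta>. c d \<noteq> 0 \<longrightarrow> inner \<nu> d = 0"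
    "\<beta> = (\<Sum>d\<in>\<Delta>. c d *\<^sub>R d)"
    using pos_root_orthogonal_simple_combination \<beta>(1) by blast
  have "0 \<le> c d * inner (inv v d) h" if d: "d \<in> \<Delta>" for d
  proof (cases "c d = 0")
    case False
    then have "inner \<nu> d = 0"
      using c(2) d by blast
    then have "d \<notin> left_descents v"
      using steinberg_add_dominant_descent_pos[OF \<sigma>, of d v] by (auto simp: \<nu>_def)
    moreover have "inv v d \<in> R"
      using weyl_root[OF weyl_inv[OF v] simple_root_in_roots[OF d]] .
    ultimately have "\<not> inner (inv v d) h < 0" and "inner (inv v d) h \<noteq> 0"
      using d regular by (auto simp: left_descents_def neg_roots_iff)
    then show ?thesis
      using c(1) d by simp
  qed simp
  moreover have "inner (inv v \<beta>) h = (\<Sum>d\<in>\<Delta>. c d * inner (inv v d) h)"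
    by (simp add: c(3) weyl_adjoint_inv[OF v] inner_sum_left)
  ultimately have "0 \<le> inner (inv v \<beta>) h"
    by (simp add: sum_nonneg)
  moreover have "inner (inv v \<beta>) h \<noteq> 0"
    using regular weyl_root[OF weyl_inv[OF v] pos_root_in_roots[OF \<beta>(1)]] by blast
  ultimately show ?thesis
    by simp
qed

lemma steinberg_map_perturb_chamber:
  assumes v: "v \<in> W" and \<sigma>: "\<sigma> \<in> dominant_weights R h"
  shows "v (perturb (inv v (steinberg R h v + \<sigma>))) \<in> chamber"
  unfolding chamber_def mem_Collect_eq
proof
  fix \<beta> assume \<beta>: "\<beta> \<in> Rp"
  define \<nu> where "\<nu> = steinberg R h v + \<sigma>"
  have \<nu>: "\<nu> \<in> dominant_weights R h"
    using steinberg_add_dominant[OF \<sigma>] by (simp add: \<nu>_def)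
  have \<mu>: "inv v \<nu> \<in> P"
    using \<nu> weyl_weight weyl_inv[OF v] by (simp add: dominant_weights_def)
  have g: "inv v \<beta> \<in> R"
    using weyl_root[OF weyl_inv[OF v] pos_root_in_roots[OF \<beta>]] .
  have "inner (inv v \<nu>) (inv v \<beta>) = inner \<nu> \<beta>"
    using weyl_inner[OF weyl_inv[OF v]] .
  moreover have "0 \<le> inner \<nu> \<beta>"
    using dominant_inner_pos_root dominant_weights_inner_nonneg[OF \<nu>] \<beta> by blast
  moreover have "0 < inner (inv v \<beta>) h" if "inner \<nu> \<beta> = 0"
    using inv_pos_root_pos_if_orthogonal[OF v \<sigma> \<beta>] that by (simp add: \<nu>_def)
  ultimately have "0 < inner (perturb (inv v \<nu>)) (inv v \<beta>)"
    using perturb_pos_iff[OF \<mu> g] by linarith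
  then show "0 < inner (v (perturb (inv v (steinberg R h v + \<sigma>)))) \<beta>"
    by (simp add: weyl_adjoint[OF v] \<nu>_def)
qed

lemma chamber_min_reps:
  assumes \<mu>: "\<mu> \<in> par_dominant R h I" and v: "v \<in> W" and C: "v (perturb \<mu>) \<in> chamber"
  shows "v \<in> min_reps R h I"
proof -
  have "v \<alpha> \<in> Rp" if \<alpha>: "\<alpha> \<in> parabolic_roots R h I \<inter> Rp" for \<alpha>
  proof -
    have "\<alpha> \<in> R" and "0 < inner \<alpha> h"
      using \<alpha> by (simp_all add: pos_roots_iff)
    moreover have "\<mu> \<in> P" and "0 \<le> inner \<mu> \<alpha>"
      using \<mu> \<alpha> by (simp_all add: par_dominant_def)
    ultimately have "0 < inner (perturb \<mu>) \<alpha>"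
      by (subst perturb_pos_iff) auto
    then have "0 < inner (v (perturb \<mu>)) (v \<alpha>)"
      by (simp add: weyl_inner[OF v])
    then show ?thesis
      using chamber_inner_root_pos_iff[OF C weyl_root[OF v \<open>\<alpha> \<in> R\<close>]] by blast
  qed
  then show ?thesis
    using v by (auto simp: min_reps_def)
qed

lemma chamber_perturb_simple_root:
  assumes \<mu>: "\<mu> \<in> P" and v: "v \<in> W" and C: "v (perturb \<mu>) \<in> chamber" and a: "a \<in> \<Delta>"
  shows "0 < inner (v \<mu>) a \<or> (inner (v \<mu>) a = 0 \<and> 0 < inner (inv v a) h)"
proof -
  have g: "inv v a \<in> R"
    using weyl_root[OF weyl_inv[OF v] simple_root_in_roots[OF a]] .
  have "0 < inner (v (perturb \<mu>)) a"
    using C simple_root_pos[OF a] by (simp add: chamber_def)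
  then have "0 < inner (perturb \<mu>) (inv v a)"
    by (simp add: weyl_adjoint[OF v])
  then show ?thesis
    unfolding weyl_adjoint[OF v, of \<mu> a] using perturb_pos_iff[OF \<mu> g] by blast
qed

text \<open>At a left descent a of v the second alternative of the previous lemma is excluded, so
  (v \<mu>, coroot a) is a positive integer.\<close>
lemma chamber_steinberg_dominant:
  assumes \<mu>: "\<mu> \<in> P" and v: "v \<in> W" and C: "v (perturb \<mu>) \<in> chamber"
  shows "v \<mu> - steinberg R h v \<in> dominant_weights R h"
proof -
  have "0 \<le> inner (v \<mu> - steinberg R h v) (coroot a)" if a: "a \<in> \<Delta>" for a
  proof -
    have "a \<noteq> 0"
      using a simple_root_in_roots root_nonzero by blast
    note a_pos = chamber_perturb_simple_root[OF \<mu> v C a]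
    show ?thesis
    proof (cases "a \<in> left_descents v")
      case True
      then have "inner (inv v a) h < 0"
        by (simp add: left_descents_def neg_roots_iff)
      then have "0 < inner (v \<mu>) (coroot a)"
        unfolding inner_coroot_pos_iff[OF \<open>a \<noteq> 0\<close>] using a_pos by auto
      moreover have "inner (v \<mu>) (coroot a) \<in> \<int>"
        using weyl_weight[OF \<mu> v] simple_root_in_roots[OF a] by (simp add: weight_lattice_def)
      ultimately have "1 \<le> inner (v \<mu>) (coroot a)"
        using Ints_nonzero_abs_ge1[of "inner (v \<mu>) (coroot a)"] by simp
      then show ?thesis
        using True by (simp add: inner_diff_left steinberg_coroot[OF a])
    next
      case False
      have "0 \<le> inner (v \<mu>) (coroot a)"
        unfolding inner_coroot_nonneg_iff[OF \<open>a \<noteq> 0\<close>] using a_pos by auto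
      then show ?thesis
        using False by (simp add: inner_diff_left steinberg_coroot[OF a])
    qed
  qed
  then show ?thesis
    using weight_diff[OF weyl_weight[OF \<mu> v] steinberg_weight] by (simp add: dominant_weights_def)
qed

lemma steinberg_map_inj_on:
  "inj_on (\<lambda>(v, \<sigma>). inv v (steinberg R h v + \<sigma>)) (min_reps R h I \<times> dominant_weights R h)"
proof (rule inj_onI, clarify)
  fix v \<sigma> v' \<sigma>'
  assume v: "v \<in> min_reps R h I" and \<sigma>: "\<sigma> \<in> dominant_weights R h"
    and v': "v' \<in> min_reps R h I" and \<sigma>': "\<sigma>' \<in> dominant_weights R h"
    and eq: "inv v (steinberg R h v + \<sigma>) = inv v' (steinberg R h v' + \<sigma>')"
  have vW: "v \<in> W" and v'W: "v' \<in> W"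
    using v v' by (auto simp: min_reps_def)
  have "v = v'"
    using chamber_unique[OF vW v'W steinberg_map_perturb_chamber[OF vW \<sigma>]]
      steinberg_map_perturb_chamber[OF v'W \<sigma>'] eq by simp
  moreover have "\<sigma> = \<sigma>'"
    using arg_cong[OF eq, of v'] vW \<open>v = v'\<close> by simp
  ultimately show "v = v' \<and> \<sigma> = \<sigma>'" ..
qed

lemma steinberg_map_surj:
  assumes \<mu>: "\<mu> \<in> par_dominant R h I"
  shows "\<mu> \<in> (\<lambda>(v, \<sigma>). inv v (steinberg R h v + \<sigma>)) ` (min_reps R h I \<times> dominant_weights R h)"
proof -
  have \<mu>P: "\<mu> \<in> P"
    using \<mu> by (simp add: par_dominant_def)
  obtain v where v: "v \<in> W" and C: "v (perturb \<mu>) \<in> chamber"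
    using chamber_exists[OF perturb_regular[OF \<mu>P]] by blast
  have "\<mu> = inv v (steinberg R h v + (v \<mu> - steinberg R h v))"
    using v by simp
  then show ?thesis
    using chamber_min_reps[OF \<mu> v C] chamber_steinberg_dominant[OF \<mu>P v C]
    by (intro rev_image_eqI[of "(v, v \<mu> - steinberg R h v)"]) auto
qed

theorem steinberg_map_bij_betw:
  "bij_betw (\<lambda>(v, \<sigma>). inv v (steinberg R h v + \<sigma>))
    (min_reps R h I \<times> dominant_weights R h) (par_dominant R h I)"
  unfolding bij_betw_def
  using steinberg_map_inj_on steinberg_map_par_dominant steinberg_map_surj by fast

end

theorem mainTheorem1:
  fixes R :: "'a::euclidean_space set" and h :: 'a and I :: "('a \<Rightarrow> 'a) set"
  assumes "root_system R"
    and "\<forall>\<alpha>\<in>R. inner \<alpha> h \<noteq> 0"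
    and "I \<subseteq> simple_refls R h"
  shows "(\<forall>v\<in>min_reps R h I. \<forall>\<sigma>\<in>dominant_weights R h.
            inv v (steinberg R h v + \<sigma>) \<in> par_dominant R h I)
    \<and> bij_betw (\<lambda>(v, \<sigma>). inv v (steinberg R h v + \<sigma>))
        (min_reps R h I \<times> dominant_weights R h) (par_dominant R h I)"
proof -
  interpret regular_root_system R h
    using assms(1,2) by unfold_locales
  show ?thesis
    using steinberg_map_par_dominant steinberg_map_bij_betw by blast
qed

end
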